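(* Let $\mathcal{G}=(\mathcal{V},\mathcal{E})$ be a directed graph with terminals $s,t$ and $f:2^{\mathcal{E}}\to\mathbb{R}_+$ normalized, monotone nondecreasing and submodular. Let $\widehat C$ be an $(s,t)$-cut minimizing $\hat f_{\mathrm{pf}}$, and let $C^*$ be a minimal $(s,t)$-cut minimizing $f$. Let $\Delta_s=\{v: \exists (v,u)\in C^*\}$ and $\Delta_t=\{v:\exists (u,v)\in C^*\}$. Then $$f(\widehat C)\le \min\{|\Delta_s|,|\Delta_t|\}\,f(C^* )\le \frac{|\mathcal{V}|}{2}f(C^* ).$$
   Context: An $(s,t)$-cut is a set of edges whose removal disconnects all $s$-$t$ paths; it is minimal if no proper subset is an $(s,t)$-cut. For $C\subseteq\mathcal{E}$, let $\mathcal{P}_C$ be the family of all partitions $\{C^\Pi_v\}_{v\in\mathcal{V}}$ of $C$ obtained by assigning each edge $(u,w)\in C$ either to its tail $u$ or to its head $w$ ($C^\Pi_v$ = edges assigned to $v$, possibly empty), and $\hat f_{\mathrm{pf}}(C)=\min_{\Pi(C)\in\mathcal{P}_C}\sum_{v\in\mathcal{V}}f(C^\Pi_v)$. *)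

theory Defs
  imports Complex_Main
begin

definition st_cut :: "('a \<times> 'a) set \<Rightarrow> 'a \<Rightarrow> 'a \<Rightarrow> ('a \<times> 'a) set \<Rightarrow> bool" where
  "st_cut E s t C \<longleftrightarrow> C \<subseteq> E \<and> (s, t) \<notin> (E - C)\<^sup>*"

definition minimal_st_cut :: "('a \<times> 'a) set \<Rightarrow> 'a \<Rightarrow> 'a \<Rightarrow> ('a \<times> 'a) set \<Rightarrow> bool" where
  "minimal_st_cut E s t C \<longleftrightarrow> st_cut E s t C \<and> (\<forall>D. D \<subset> C \<longrightarrow> \<not> st_cut E s t D)"

definition normalized :: "('e set \<Rightarrow> real) \<Rightarrow> bool" where
  "normalized f \<longleftrightarrow> f {} = 0"

definition monotone_on_subsets :: "'e set \<Rightarrow> ('e set \<Rightarrow> real) \<Rightarrow> bool" where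
  "monotone_on_subsets E f \<longleftrightarrow> (\<forall>A B. A \<subseteq> B \<and> B \<subseteq> E \<longrightarrow> f A \<le> f B)"

definition submodular_on :: "'e set \<Rightarrow> ('e set \<Rightarrow> real) \<Rightarrow> bool" where
  "submodular_on E f \<longleftrightarrow>
     (\<forall>A B. A \<subseteq> E \<and> B \<subseteq> E \<longrightarrow> f (A \<union> B) + f (A \<inter> B) \<le> f A + f B)"

text \<open>Assignments of each edge of C to its tail or its head; the partition
  class of v is the set of edges assigned to v.\<close>

definition edge_assignments :: "('a \<times> 'a) set \<Rightarrow> (('a \<times> 'a) \<Rightarrow> 'a) set" where
  "edge_assignments C = {g. (\<forall>e\<in>C. g e = fst e \<or> g e = snd e) \<and> (\<forall>e. e \<notin> C \<longrightarrow> g e = undefined)}"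

definition f_pf :: "'a set \<Rightarrow> (('a \<times> 'a) set \<Rightarrow> real) \<Rightarrow> ('a \<times> 'a) set \<Rightarrow> real" where
  "f_pf V f C = Min ((\<lambda>g. \<Sum>v\<in>V. f {e\<in>C. g e = v}) ` edge_assignments C)"

end

theory Submission
  imports Defs "HOL-Library.FuncSet"
begin

text \<open>Any assignment of the edges of a cut C to endpoints partitions C, so by
  subadditivity (a consequence of submodularity, normalization and nonnegativity)
  f C \<le> f_pf C; in particular f C_hat \<le> f_pf C_hat \<le> f_pf C_star. Assigning every edge
  of C_star to its tail (resp. head) puts at most f C_star on each of the
  |\<Delta>_s| (resp. |\<Delta>_t|) vertices by monotonicity. Finally, minimality of C_star
  means every cut edge (u,w) has u reachable from s and t reachable from w
  in E - C_star, so no vertex is both a tail and a head: \<Delta>_s and \<Delta>_t are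
  disjoint and the smaller has at most |V|/2 elements.\<close>

lemma edge_assignments_eq_PiE: "edge_assignments C = (\<Pi>\<^sub>E e\<in>C. {fst e, snd e})"
  unfolding edge_assignments_def PiE_def Pi_def extensional_def by blast

lemma finite_edge_assignments: "finite C \<Longrightarrow> finite (edge_assignments C)"
  unfolding edge_assignments_eq_PiE by (rule finite_PiE) auto

lemma edge_assignment_restrict:
  assumes "\<forall>e. h e = fst e \<or> h e = snd e"
  shows "(\<lambda>e. if e \<in> C then h e else undefined) \<in> edge_assignments C"
  using assms unfolding edge_assignments_def by (simp del: split_paired_All)

lemma submodular_on_Union_le_sum:
  assumes "finite S" and "f {} = 0" and "\<forall>A. A \<subseteq> E \<longrightarrow> 0 \<le> f A"
    and "submodular_on E f" and "\<forall>v\<in>S. A v \<subseteq> E"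
  shows "f (\<Union>v\<in>S. A v) \<le> (\<Sum>v\<in>S. f (A v))"
  using assms(1,5)
proof (induction S rule: finite_induct)
  case empty
  then show ?case using assms(2) by simp
next
  case (insert x F)
  let ?U = "\<Union>v\<in>F. A v"
  have "?U \<subseteq> E" and xE: "A x \<subseteq> E" using insert.prems by auto
  then have "f (A x \<union> ?U) + f (A x \<inter> ?U) \<le> f (A x) + f ?U"
    using assms(4) unfolding submodular_on_def by blast
  moreover have "0 \<le> f (A x \<inter> ?U)" using assms(3) xE by blast
  moreover have "f ?U \<le> (\<Sum>v\<in>F. f (A v))" using insert by auto
  ultimately show ?case using insert.hyps by simp
qed

lemma le_sum_edge_assignment_classes:
  assumes "finite V" and "E \<subseteq> V \<times> V" and "C \<subseteq> E"
    and "f {} = 0" and "\<forall>A. A \<subseteq> E \<longrightarrow> 0 \<le> f A" and "submodular_on E f"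
    and g: "g \<in> edge_assignments C"
  shows "f C \<le> (\<Sum>v\<in>V. f {e\<in>C. g e = v})"
proof -
  have "g e \<in> V" if e: "e \<in> C" for e
  proof -
    have "e \<in> V \<times> V" using e assms(2,3) by blast
    moreover have "g e = fst e \<or> g e = snd e" using g e unfolding edge_assignments_def by blast
    ultimately show ?thesis by auto
  qed
  then have "C = (\<Union>v\<in>V. {e\<in>C. g e = v})" by auto
  moreover have "f (\<Union>v\<in>V. {e\<in>C. g e = v}) \<le> (\<Sum>v\<in>V. f {e\<in>C. g e = v})"
    by (rule submodular_on_Union_le_sum[OF assms(1,4-6)]) (use assms(3) in auto)
  ultimately show ?thesis by simp
qed

lemma finite_edge_subset:
  assumes "finite V" and "E \<subseteq> V \<times> V" and "C \<subseteq> E"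
  shows "finite C"
  using assms by (meson finite_SigmaI finite_subset subset_trans)

lemma le_f_pf:
  assumes "finite V" and "E \<subseteq> V \<times> V" and "C \<subseteq> E"
    and "f {} = 0" and "\<forall>A. A \<subseteq> E \<longrightarrow> 0 \<le> f A" and "submodular_on E f"
  shows "f C \<le> f_pf V f C"
proof -
  have "(\<lambda>e. if e \<in> C then fst e else undefined) \<in> edge_assignments C"
    by (rule edge_assignment_restrict) simp
  moreover have "finite (edge_assignments C)"
    using finite_edge_assignments finite_edge_subset[OF assms(1-3)] by blast
  ultimately show ?thesis
    unfolding f_pf_def using le_sum_edge_assignment_classes[OF assms]
    by (subst Min_ge_iff) auto
qed

lemma f_pf_le_card_image:
  assumes "finite V" and "E \<subseteq> V \<times> V" and "C \<subseteq> E"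
    and "f {} = 0" and "monotone_on_subsets E f"
    and h: "\<forall>e. h e = fst e \<or> h e = snd e"
  shows "f_pf V f C \<le> real (card (h ` C)) * f C"
proof -
  let ?g = "\<lambda>e. if e \<in> C then h e else undefined"
  have "?g \<in> edge_assignments C" using h by (rule edge_assignment_restrict)
  then have "f_pf V f C \<le> (\<Sum>v\<in>V. f {e\<in>C. ?g e = v})"
    unfolding f_pf_def
    using finite_edge_assignments finite_edge_subset[OF assms(1-3)] by (intro Min_le) auto
  also have "\<dots> \<le> (\<Sum>v\<in>V. if v \<in> h ` C then f C else 0)"
  proof (rule sum_mono)
    fix v
    show "f {e\<in>C. ?g e = v} \<le> (if v \<in> h ` C then f C else 0)"
    proof (cases "v \<in> h ` C")
      case True
      have "{e\<in>C. ?g e = v} \<subseteq> C" by blast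
      then have "f {e\<in>C. ?g e = v} \<le> f C"
        using assms(3,5) unfolding monotone_on_subsets_def by blast
      then show ?thesis using True by simp
    next
      case False
      then have "{e\<in>C. ?g e = v} = {}" by auto
      then have "f {e\<in>C. ?g e = v} = 0" by (simp only: assms(4))
      then show ?thesis using False by simp
    qed
  qed
  also have "\<dots> = real (card (V \<inter> h ` C)) * f C"
    using assms(1) by (simp add: sum.If_cases)
  also have "V \<inter> h ` C = h ` C"
  proof -
    have "h e \<in> V" if "e \<in> C" for e
      using h[rule_format, of e] that assms(2,3) by (cases e) auto
    then show ?thesis by blast
  qed
  finally show ?thesis .
qed

lemma minimal_st_cut_edge_reachable:
  assumes "minimal_st_cut E s t C" and "(u, w) \<in> C"
  shows "(s, u) \<in> (E - C)\<^sup>*" and "(w, t) \<in> (E - C)\<^sup>*"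
proof -
  have cut: "C \<subseteq> E" "(s, t) \<notin> (E - C)\<^sup>*"
    using assms(1) unfolding minimal_st_cut_def st_cut_def by auto
  have "\<not> st_cut E s t (C - {(u, w)})"
    using assms unfolding minimal_st_cut_def by blast
  then have "(s, t) \<in> (E - (C - {(u, w)}))\<^sup>*"
    using cut unfolding st_cut_def by auto
  moreover have "E - (C - {(u, w)}) = insert (u, w) (E - C)" using assms(2) cut by auto
  ultimately have "(s, t) \<in> (E - C)\<^sup>* \<union> {(x, y). (x, u) \<in> (E - C)\<^sup>* \<and> (w, y) \<in> (E - C)\<^sup>*}"
    by (simp only: rtrancl_insert)
  then show "(s, u) \<in> (E - C)\<^sup>*" and "(w, t) \<in> (E - C)\<^sup>*" using cut by auto
qed

lemma minimal_st_cut_Domain_Range_disjoint: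
  assumes "minimal_st_cut E s t C"
  shows "Domain C \<inter> Range C = {}"
proof (rule ccontr)
  assume "Domain C \<inter> Range C \<noteq> {}"
  then obtain v a b where "(v, a) \<in> C" "(b, v) \<in> C" by auto
  then have "(s, v) \<in> (E - C)\<^sup>*" "(v, t) \<in> (E - C)\<^sup>*"
    using minimal_st_cut_edge_reachable[OF assms] by blast+
  then have "(s, t) \<in> (E - C)\<^sup>*" by simp
  then show False using assms unfolding minimal_st_cut_def st_cut_def by blast
qed

lemma min_card_disjoint_le_half:
  assumes "finite V" and "A \<subseteq> V" and "B \<subseteq> V" and "A \<inter> B = {}"
  shows "real (min (card A) (card B)) \<le> real (card V) / 2"
proof -
  have "card A + card B = card (A \<union> B)"
    using assms by (simp add: card_Un_disjoint finite_subset)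
  also have "\<dots> \<le> card V" using assms by (simp add: card_mono)
  finally show ?thesis by (simp add: min_def)
qed

theorem theorem3:
  fixes V :: "'a set" and E :: "('a \<times> 'a) set" and s t :: 'a
    and f :: "('a \<times> 'a) set \<Rightarrow> real"
    and C_hat C_star :: "('a \<times> 'a) set"
  assumes finV: "finite V" and EV: "E \<subseteq> V \<times> V"
    and sV: "s \<in> V" and tV: "t \<in> V"
    and f_nonneg: "\<forall>A. A \<subseteq> E \<longrightarrow> 0 \<le> f A"
    and f_norm: "normalized f"
    and f_mono: "monotone_on_subsets E f"
    and f_sub: "submodular_on E f"
    and hat_cut: "st_cut E s t C_hat"
    and hat_opt: "\<forall>C. st_cut E s t C \<longrightarrow> f_pf V f C_hat \<le> f_pf V f C"
    and star_min: "minimal_st_cut E s t C_star"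
    and star_opt: "\<forall>C. st_cut E s t C \<longrightarrow> f C_star \<le> f C"
  shows "f C_hat \<le> real (min (card {v. \<exists>u. (v, u) \<in> C_star}) (card {v. \<exists>u. (u, v) \<in> C_star}))
                      * f C_star
       \<and> real (min (card {v. \<exists>u. (v, u) \<in> C_star}) (card {v. \<exists>u. (u, v) \<in> C_star})) * f C_star
           \<le> real (card V) / 2 * f C_star"
proof -
  have norm: "f {} = 0" using f_norm unfolding normalized_def .
  have star_cut: "st_cut E s t C_star" using star_min unfolding minimal_st_cut_def by blast
  have hatE: "C_hat \<subseteq> E" and starE: "C_star \<subseteq> E"
    using hat_cut star_cut unfolding st_cut_def by auto
  have tails: "{v. \<exists>u. (v, u) \<in> C_star} = Domain C_star"
    and heads: "{v. \<exists>u. (u, v) \<in> C_star} = Range C_star" by auto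
  let ?m = "real (min (card (Domain C_star)) (card (Range C_star)))"
  have "f C_hat \<le> f_pf V f C_star"
    using le_f_pf[OF finV EV hatE norm f_nonneg f_sub] hat_opt star_cut by fastforce
  moreover have "f_pf V f C_star \<le> real (card (Domain C_star)) * f C_star"
    and "f_pf V f C_star \<le> real (card (Range C_star)) * f C_star"
    using f_pf_le_card_image[OF finV EV starE norm f_mono, of fst]
      f_pf_le_card_image[OF finV EV starE norm f_mono, of snd]
    by (simp_all add: Domain_fst Range_snd)
  ultimately have "f C_hat \<le> ?m * f C_star" by (simp add: min_def)
  moreover have "?m * f C_star \<le> real (card V) / 2 * f C_star"
  proof (rule mult_right_mono)
    have "Domain C_star \<subseteq> V" "Range C_star \<subseteq> V" using starE EV by auto
    then show "?m \<le> real (card V) / 2"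
      using min_card_disjoint_le_half[OF finV _ _ minimal_st_cut_Domain_Range_disjoint[OF star_min]]
      by blast
    show "0 \<le> f C_star" using f_nonneg starE by blast
  qed
  ultimately show ?thesis unfolding tails heads by blast
qed

end
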